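(* Assume (Moment): there exists $\lambda>0$ with $\int_{(0,\infty)}(e^{\lambda t}-1)\nu(dt)<\infty$. Then for every $\varepsilon>0$ there exists $m>0$ such that $$\liminf_{\ell\to\infty}-\frac1\ell\log\mathbb P\big(A(\ell)[\Pi_2^{(m)}]\ge\varepsilon\ell\big)>0.$$
   Context: Fix $d\ge2$; Euclidean norm $\|\cdot\|$. Fix a nonzero locally finite measure $\nu$ on $(0,\infty)$ and a Poisson point process $\Pi$ on $\mathbb R^d\times(0,\infty)$ with intensity $\mathrm{Leb}\otimes\nu$. For a point process $\eta$ on $\mathbb R^d\times[0,\infty)$, the mass of a Borel $B\subseteq\mathbb R^d$ is $M(B)[\eta]=\int_{B\times[0,\infty)}t\,\eta(dx,dt)$. Animals: finite connected graphs $\xi=(V,E)$ with $V\subseteq\mathbb R^d$, length $\sum_{\{x,y\}\in E}\|x-y\|$, mass $M(V)$. $\mathcal A(\ell)$: animals containing $0$ with length $\le\ell$; $A(\ell)[\eta]=\sup_{\xi\in\mathcal A(\ell)}M(\xi)[\eta]$. For $m>0$, $\Pi_2^{(m)}$ is the image of $\Pi$ under $(x,t)\mapsto(x,(t-m)^+)$. *)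

theory Defs
  imports "HOL-Probability.Probability"
begin

text \<open>Point configurations on R^d x [0,oo) are given by multiplicity functions
  (eta p = number/weight of points of the configuration located at p).\<close>

definition mass :: "'a set \<Rightarrow> ('a \<times> real \<Rightarrow> ennreal) \<Rightarrow> ennreal" where
  "mass B eta = (\<integral>\<^sup>+ p. eta p * ennreal (snd p) * indicator (B \<times> {0..}) p \<partial>count_space UNIV)"

definition push :: "('b \<Rightarrow> 'c) \<Rightarrow> ('b \<Rightarrow> ennreal) \<Rightarrow> 'c \<Rightarrow> ennreal" where
  "push f eta q = (\<integral>\<^sup>+ p. eta p * indicator (f -` {q}) p \<partial>count_space UNIV)"

definition count_in :: "('b \<Rightarrow> nat) \<Rightarrow> 'b set \<Rightarrow> ennreal" where
  "count_in N B = (\<integral>\<^sup>+ p. of_nat (N p) * indicator B p \<partial>count_space UNIV)"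

definition poisson_pp :: "'w measure \<Rightarrow> real measure \<Rightarrow> ('w \<Rightarrow> ('a::euclidean_space \<times> real) \<Rightarrow> nat) \<Rightarrow> bool" where
  "poisson_pp M nu PP \<longleftrightarrow> prob_space M \<and>
     (\<forall>B \<in> sets (lborel \<Otimes>\<^sub>M nu). (\<lambda>\<omega>. count_in (PP \<omega>) B) \<in> borel_measurable M) \<and>
     (\<forall>B \<in> sets (lborel \<Otimes>\<^sub>M nu). emeasure (lborel \<Otimes>\<^sub>M nu) B < \<infinity> \<longrightarrow>
        (\<forall>n::nat. measure M {\<omega> \<in> space M. count_in (PP \<omega>) B = of_nat n}
           = exp (- enn2real (emeasure (lborel \<Otimes>\<^sub>M nu) B)) *
             enn2real (emeasure (lborel \<Otimes>\<^sub>M nu) B) ^ n / fact n)) \<and>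
     (\<forall>B \<in> sets (lborel \<Otimes>\<^sub>M nu). emeasure (lborel \<Otimes>\<^sub>M nu) B = \<infinity> \<longrightarrow>
        (AE \<omega> in M. count_in (PP \<omega>) B = \<infinity>)) \<and>
     (\<forall>(I::nat set) B. finite I \<longrightarrow> (\<forall>i\<in>I. B i \<in> sets (lborel \<Otimes>\<^sub>M nu)) \<longrightarrow> disjoint_family_on B I \<longrightarrow>
        prob_space.indep_vars M (\<lambda>_. borel) (\<lambda>i \<omega>. count_in (PP \<omega>) (B i)) I)"

definition animal :: "'a set \<Rightarrow> 'a set set \<Rightarrow> bool" where
  "animal V E \<longleftrightarrow> finite V \<and> V \<noteq> {} \<and>
     E \<subseteq> {{x, y} | x y. x \<in> V \<and> y \<in> V \<and> x \<noteq> y} \<and>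
     (\<forall>x\<in>V. \<forall>y\<in>V. (x, y) \<in> {(u, v). {u, v} \<in> E}\<^sup>*)"

definition edge_length :: "'a::real_normed_vector set \<Rightarrow> real" where
  "edge_length e = (THE d. \<exists>x y. e = {x, y} \<and> d = norm (x - y))"

definition animal_length :: "'a::real_normed_vector set set \<Rightarrow> real" where
  "animal_length E = (\<Sum>e\<in>E. edge_length e)"

definition A_max :: "real \<Rightarrow> ('a::real_normed_vector \<times> real \<Rightarrow> ennreal) \<Rightarrow> ennreal" where
  "A_max l eta = (SUP VE \<in> {(V, E). animal V E \<and> 0 \<in> V \<and> animal_length E \<le> l}. mass (fst VE) eta)"

definition Pi2 :: "real \<Rightarrow> ('a \<times> real \<Rightarrow> nat) \<Rightarrow> 'a \<times> real \<Rightarrow> ennreal" where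
  "Pi2 m N = push (\<lambda>(x, t). (x, max (t - m) 0)) (\<lambda>p. of_nat (N p))"

text \<open>Outer probability (equals the probability for measurable events).\<close>
definition outer_prob :: "'w measure \<Rightarrow> 'w set \<Rightarrow> real" where
  "outer_prob M S = Inf {measure M T | T. T \<in> sets M \<and> S \<inter> space M \<subseteq> T}"

definition neg_log :: "real \<Rightarrow> ereal" where
  "neg_log p = (if p = 0 then \<infinity> else ereal (- ln p))"

end

theory Submission
  imports Defs
begin

(* The vertices of an animal containing 0 of length at most l can be visited by a walk from 0
   of length at most 2l (walk twice around a spanning tree). Discretizing this walk at scale L,
   the animal is covered by cubes of side 4L centred at the partial sums of a lattice path with
   N = floor(4l/L) steps, each step taken from a fixed set of at most 5^d vectors.

   The mass of Pi_2^(m) in a set U is at most the weighted count of points of Pi in the slabs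
   U x (m+j, m+j+1] with weights j+1. For a Poisson process its exponential moment at lam is at
   most exp(|U| delta_m), where delta_m = int (e^(lam (t-m+1)) - 1) 1_{t>m} nu(dt) tends to 0 as
   m -> oo by the moment assumption. A Chernoff bound for each of the 5^(dN) lattice paths and a
   union bound give P(A(l)[Pi_2^(m)] >= eps l) <= exp(-lam eps l / 4) once L and m are large. *)

section \<open>Spanning walks of animals\<close>

fun walk_length :: "'a::real_normed_vector list \<Rightarrow> real" where
  "walk_length (x # y # xs) = norm (x - y) + walk_length (y # xs)"
| "walk_length _ = 0"

lemma walk_length_append_Cons:
  "walk_length (xs @ u # ys) = walk_length (xs @ [u]) + walk_length (u # ys)"
proof (induction xs)
  case (Cons a xs)
  then show ?case by (cases xs) auto
qed simp

lemma walk_length_snoc: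
  "xs \<noteq> [] \<Longrightarrow> walk_length (xs @ [x]) = walk_length xs + norm (last xs - x)"
proof (induction xs)
  case (Cons a xs)
  then show ?case by (cases xs) auto
qed simp

lemma walk_length_detour:
  "walk_length (xs @ u # v # u # ys) = walk_length (xs @ u # ys) + 2 * norm (u - v)"
  using walk_length_append_Cons[of xs u "v # u # ys"] walk_length_append_Cons[of xs u ys]
  by (simp add: norm_minus_commute)

lemma edge_length_doubleton: "edge_length {x, y} = norm (x - y)"
  unfolding edge_length_def
proof (rule the_equality)
  fix d assume "\<exists>a b. {x, y} = {a, b} \<and> d = norm (a - b)"
  then show "d = norm (x - y)"
    by (auto simp: doubleton_eq_iff norm_minus_commute)
qed blast

lemma rtrancl_leaves_set:
  assumes "(a, b) \<in> R\<^sup>*" "a \<in> S" "b \<notin> S"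
  shows "\<exists>u v. (u, v) \<in> R \<and> u \<in> S \<and> v \<notin> S"
  using assms by (induction rule: rtrancl_induct) auto

lemma animal_finite_edges:
  assumes "animal V E"
  shows "finite E"
proof -
  have "E \<subseteq> (\<lambda>(x, y). {x, y}) ` (V \<times> V)"
    using assms by (auto simp: animal_def)
  then show ?thesis
    using assms by (auto simp: animal_def intro: finite_subset)
qed

text \<open>Prim's algorithm with a doubled walk: attach a new vertex along an edge leaving the
  current vertex set, by a detour \<open>u, v, u\<close> inserted at an occurrence of \<open>u\<close>.\<close>

lemma animal_walk_grow:
  fixes V :: "'a::real_normed_vector set"
  assumes an: "animal V E" and S: "S \<subseteq> V" "S \<noteq> V" "x \<in> S"
    and F: "F \<subseteq> E" "\<forall>e\<in>F. e \<subseteq> S"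
    and w: "hd w = x" "set w = S" "walk_length w \<le> 2 * sum edge_length F"
  shows "\<exists>v F' w'. v \<in> V - S \<and> F' \<subseteq> E \<and> (\<forall>e\<in>F'. e \<subseteq> insert v S)
    \<and> hd w' = x \<and> set w' = insert v S \<and> walk_length w' \<le> 2 * sum edge_length F'"
proof -
  obtain y where y: "y \<in> V" "y \<notin> S" using S by blast
  have "(x, y) \<in> {(u, v). {u, v} \<in> E}\<^sup>*"
    using an S y unfolding animal_def by blast
  from rtrancl_leaves_set[OF this S(3) y(2)]
  obtain u v where uv: "{u, v} \<in> E" "u \<in> S" "v \<notin> S" by auto
  have "v \<in> V"
    using an uv(1) unfolding animal_def by (auto simp: doubleton_eq_iff)
  from uv(2) w(2) obtain xs ys where split: "w = xs @ u # ys" by (metis split_list)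
  have "{u, v} \<notin> F" using F(2) uv(3) by auto
  moreover have "finite F"
    using F(1) animal_finite_edges[OF an] by (rule finite_subset)
  ultimately have "sum edge_length (insert {u, v} F) = norm (u - v) + sum edge_length F"
    by (simp add: edge_length_doubleton)
  moreover have "walk_length (xs @ u # v # u # ys) = walk_length w + 2 * norm (u - v)"
    unfolding split by (rule walk_length_detour)
  moreover have "hd (xs @ u # v # u # ys) = x" "set (xs @ u # v # u # ys) = insert v S"
    using w(1,2) unfolding split by (auto simp: hd_append)
  moreover have "\<forall>e\<in>insert {u, v} F. e \<subseteq> insert v S"
    using F(2) uv(2) by auto
  moreover have "v \<in> V - S" "insert {u, v} F \<subseteq> E"
    using uv(1,3) \<open>v \<in> V\<close> F(1) by auto
  ultimately show ?thesis
    using w(3) by (intro exI[of _ v] exI[of _ "insert {u, v} F"] exI[of _ "xs @ u # v # u # ys"]) simp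
qed

lemma animal_spanning_walk:
  fixes V :: "'a::real_normed_vector set"
  assumes an: "animal V E" and x: "x \<in> V"
  shows "\<exists>w. hd w = x \<and> set w = V \<and> walk_length w \<le> 2 * animal_length E"
proof -
  have finV: "finite V" using an by (simp add: animal_def)
  have grow: "\<exists>S F w. S \<subseteq> V \<and> card S = Suc n \<and> x \<in> S \<and> F \<subseteq> E \<and> (\<forall>e\<in>F. e \<subseteq> S)
      \<and> hd w = x \<and> set w = S \<and> walk_length w \<le> 2 * sum edge_length F"
    if "Suc n \<le> card V" for n
    using that
  proof (induction n)
    case 0
    show ?case using x by (intro exI[of _ "{x}"] exI[of _ "{}"] exI[of _ "[x]"]) simp
  next
    case (Suc n)
    from Suc.IH[OF Suc_leD[OF Suc.prems]] obtain S F w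
      where S: "S \<subseteq> V" "card S = Suc n" "x \<in> S" "F \<subseteq> E" "\<forall>e\<in>F. e \<subseteq> S"
        "hd w = x" "set w = S" "walk_length w \<le> 2 * sum edge_length F"
      by blast
    have "S \<noteq> V" using S(2) Suc.prems by auto
    from animal_walk_grow[OF an S(1) this S(3-8)] obtain v F' w'
      where v: "v \<in> V - S" and F': "F' \<subseteq> E" "\<forall>e\<in>F'. e \<subseteq> insert v S"
        and w': "hd w' = x" "set w' = insert v S" "walk_length w' \<le> 2 * sum edge_length F'"
      by blast
    have "card (insert v S) = Suc (Suc n)"
      using S(1,2) v finV by (simp add: finite_subset)
    moreover have "insert v S \<subseteq> V" "x \<in> insert v S" using S(1,3) v by auto
    ultimately show ?case
      using F' w' by (intro exI[of _ "insert v S"] exI[of _ F'] exI[of _ w']) simp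
  qed
  have "card V > 0" using x finV card_gt_0_iff by blast
  then have "Suc (card V - 1) \<le> card V" by simp
  from grow[OF this] obtain S F w where S: "S \<subseteq> V" "card S = Suc (card V - 1)" "F \<subseteq> E"
    "hd w = x" "set w = S" "walk_length w \<le> 2 * sum edge_length F"
    by blast
  have "card S = card V" using S(2) \<open>card V > 0\<close> by simp
  then have "S = V" using S(1) finV card_subset_eq by blast
  have "E \<subseteq> {{x, y} | x y. x \<in> V \<and> y \<in> V \<and> x \<noteq> y}"
    using an unfolding animal_def by blast
  then have "edge_length e \<ge> 0" if "e \<in> E" for e
    using that by (auto simp: edge_length_doubleton)
  then have "sum edge_length F \<le> sum edge_length E"
    using S(3) animal_finite_edges[OF an] by (intro sum_mono2) auto
  then show ?thesis
    using S \<open>S = V\<close> unfolding animal_length_def by (intro exI[of _ w]) simp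
qed

section \<open>Covering animals by cubes along lattice paths\<close>

definition lattice_round :: "real \<Rightarrow> 'a::euclidean_space \<Rightarrow> 'a" where
  "lattice_round L x = (\<Sum>b\<in>Basis. (L * of_int (round ((x \<bullet> b) / L))) *\<^sub>R b)"

definition lattice_steps :: "real \<Rightarrow> 'a::euclidean_space set" where
  "lattice_steps L = {v. \<forall>b\<in>Basis. \<exists>k::int. \<bar>k\<bar> \<le> 2 \<and> v \<bullet> b = L * of_int k}"

definition cube :: "'a::euclidean_space \<Rightarrow> real \<Rightarrow> 'a set" where
  "cube c r = {x. \<forall>b\<in>Basis. \<bar>(x - c) \<bullet> b\<bar> \<le> r}"

definition path_cover :: "real \<Rightarrow> 'a::euclidean_space list \<Rightarrow> 'a set" where
  "path_cover L ss = (\<Union>i\<le>length ss. cube (sum_list (take i ss)) (2 * L))"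

lemma lattice_round_inner:
  "b \<in> Basis \<Longrightarrow> lattice_round L x \<bullet> b = L * of_int (round ((x \<bullet> b) / L))"
  by (simp add: lattice_round_def inner_sum_left inner_Basis if_distrib cong: if_cong)

lemma lattice_round_zero [simp]: "lattice_round L 0 = 0"
  by (simp add: lattice_round_def)

lemma lattice_round_error:
  assumes "L > 0" "b \<in> Basis"
  shows "\<bar>x \<bullet> b - lattice_round L x \<bullet> b\<bar> \<le> L / 2"
proof -
  have "x \<bullet> b - lattice_round L x \<bullet> b = L * ((x \<bullet> b) / L - of_int (round ((x \<bullet> b) / L)))"
    using assms by (simp add: lattice_round_inner field_simps)
  moreover have "\<bar>(x \<bullet> b) / L - of_int (round ((x \<bullet> b) / L))\<bar> \<le> 1 / 2"
    using of_int_round_abs_le[of "(x \<bullet> b) / L"] by (simp add: abs_minus_commute)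
  ultimately show ?thesis
    using assms(1) by (simp add: abs_mult)
qed

lemma zero_in_lattice_steps: "0 \<in> lattice_steps L"
  unfolding lattice_steps_def by (intro CollectI ballI exI[of _ "0::int"]) simp

lemma lattice_round_diff_in_lattice_steps:
  assumes L: "L > 0" and near: "norm (p - a) \<le> L"
  shows "lattice_round L p - lattice_round L a \<in> lattice_steps L"
  unfolding lattice_steps_def
proof (intro CollectI ballI)
  fix b :: 'a assume b: "b \<in> Basis"
  define u where "u = (p \<bullet> b) / L"
  define v where "v = (a \<bullet> b) / L"
  have "\<bar>(p - a) \<bullet> b\<bar> \<le> L" using Basis_le_norm[OF b, of "p - a"] near by linarith
  moreover have "u - v = ((p - a) \<bullet> b) / L"
    unfolding u_def v_def by (simp add: inner_diff_left diff_divide_distrib)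
  ultimately have "\<bar>u - v\<bar> \<le> 1" using L by (simp add: abs_divide)
  moreover have "\<bar>of_int (round u) - u\<bar> \<le> 1/2" "\<bar>of_int (round v) - v\<bar> \<le> 1/2"
    by (rule of_int_round_abs_le)+
  ultimately have "\<bar>round u - round v\<bar> \<le> 2" by linarith
  moreover have "(lattice_round L p - lattice_round L a) \<bullet> b = L * of_int (round u - round v)"
    using b by (simp add: inner_diff_left lattice_round_inner u_def v_def right_diff_distrib)
  ultimately show "\<exists>k::int. \<bar>k\<bar> \<le> 2 \<and> (lattice_round L p - lattice_round L a) \<bullet> b = L * of_int k"
    by blast
qed

lemma lattice_steps_subset_PiE:
  "lattice_steps L \<subseteq> (\<lambda>g. \<Sum>b\<in>Basis. g b *\<^sub>R b) ` (Basis \<rightarrow>\<^sub>E (\<lambda>k::int. L * of_int k) ` {-2..2})"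
proof
  fix v :: 'a assume v: "v \<in> lattice_steps L"
  have "restrict (\<lambda>b. v \<bullet> b) Basis \<in> Basis \<rightarrow>\<^sub>E (\<lambda>k::int. L * of_int k) ` {-2..2}"
    using v unfolding lattice_steps_def by (fastforce simp: image_iff abs_le_iff)
  moreover have "v = (\<Sum>b\<in>Basis. restrict (\<lambda>b. v \<bullet> b) Basis b *\<^sub>R b)"
    by (simp add: euclidean_representation)
  ultimately show "v \<in> (\<lambda>g. \<Sum>b\<in>Basis. g b *\<^sub>R b) ` (Basis \<rightarrow>\<^sub>E (\<lambda>k::int. L * of_int k) ` {-2..2})"
    by blast
qed

lemma finite_lattice_steps: "finite (lattice_steps L)"
  by (rule finite_subset[OF lattice_steps_subset_PiE]) (intro finite_imageI finite_PiE; simp)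

lemma card_lattice_steps_le: "card (lattice_steps L :: 'a::euclidean_space set) \<le> 5 ^ DIM('a)"
proof -
  let ?K = "(\<lambda>k::int. L * of_int k) ` {-2..2}"
  have "card (lattice_steps L :: 'a set) \<le> card ((\<lambda>g. \<Sum>b\<in>Basis. g b *\<^sub>R b) ` (Basis \<rightarrow>\<^sub>E ?K) :: 'a set)"
    by (rule card_mono[OF _ lattice_steps_subset_PiE]) (intro finite_imageI finite_PiE; simp)
  also have "\<dots> \<le> card (Basis \<rightarrow>\<^sub>E ?K :: ('a \<Rightarrow> real) set)"
    by (rule card_image_le) (intro finite_PiE; simp)
  also have "\<dots> = card ?K ^ DIM('a)"
    by (simp add: card_PiE)
  also have "\<dots> \<le> 5 ^ DIM('a)"
    using card_image_le[of "{-2..2::int}" "\<lambda>k::int. L * of_int k"] by (intro power_mono) simp_all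
  finally show ?thesis .
qed

text \<open>Split the segment from \<open>a\<close> to \<open>x\<close> into \<open>k\<close> pieces of length at most \<open>L\<close>; consecutive
  rounded points then differ by a lattice step.\<close>

lemma lattice_path_between:
  assumes L: "L > 0" and dist: "norm (x - a) \<le> real k * L"
  shows "\<exists>ss. set ss \<subseteq> lattice_steps L \<and> length ss = k
    \<and> sum_list ss = lattice_round L x - lattice_round L (a::'a::euclidean_space)"
  using dist
proof (induction k arbitrary: a)
  case 0
  then show ?case by (intro exI[of _ "[]"]) simp
next
  case (Suc j)
  define p where "p = a + (1 / (real j + 1)) *\<^sub>R (x - a)"
  have "norm (p - a) = norm (x - a) / (real j + 1)" by (simp add: p_def)
  also have "\<dots> \<le> L" using Suc.prems by (simp add: divide_le_eq mult.commute add.commute)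
  finally have pa: "norm (p - a) \<le> L" .
  have "x - p = (1 - 1 / (real j + 1)) *\<^sub>R (x - a)"
    by (simp add: p_def algebra_simps)
  also have "1 - 1 / (real j + 1) = real j / (real j + 1)"
    by (simp add: field_simps)
  finally have "x - p = (real j / (real j + 1)) *\<^sub>R (x - a)" .
  then have "norm (x - p) = real j / (real j + 1) * norm (x - a)" by simp
  also have "\<dots> \<le> real j / (real j + 1) * (real (Suc j) * L)"
    using Suc.prems by (intro mult_left_mono) auto
  also have "\<dots> = real j * L" by (simp add: field_simps)
  finally obtain ss where "set ss \<subseteq> lattice_steps L" "length ss = j"
    "sum_list ss = lattice_round L x - lattice_round L p"
    using Suc.IH by blast
  then show ?case
    using lattice_round_diff_in_lattice_steps[OF L pa]
    by (intro exI[of _ "(lattice_round L p - lattice_round L a) # ss"]) auto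
qed

lemma path_cover_append: "path_cover L ss \<subseteq> path_cover L (ss @ tt)"
  unfolding path_cover_def
proof (intro UN_least)
  fix i assume "i \<in> {..length ss}"
  then have "take i (ss @ tt) = take i ss" "i \<in> {..length (ss @ tt)}" by auto
  then show "cube (sum_list (take i ss)) (2 * L)
      \<subseteq> (\<Union>i\<le>length (ss @ tt). cube (sum_list (take i (ss @ tt))) (2 * L))"
    by (metis UN_upper)
qed

lemma in_path_cover_if_near:
  assumes L: "L > 0" and "sum_list ss = lattice_round L a" "norm (x - a) \<le> L"
  shows "x \<in> path_cover L ss"
proof -
  have "\<bar>(x - lattice_round L a) \<bullet> b\<bar> \<le> 2 * L" if b: "b \<in> Basis" for b
  proof -
    have "\<bar>(x - a) \<bullet> b\<bar> \<le> L" using Basis_le_norm[OF b, of "x - a"] assms(3) by linarith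
    moreover have "\<bar>a \<bullet> b - lattice_round L a \<bullet> b\<bar> \<le> L / 2" by (rule lattice_round_error[OF L b])
    moreover have "(x - lattice_round L a) \<bullet> b = (x - a) \<bullet> b + (a \<bullet> b - lattice_round L a \<bullet> b)"
      by (simp add: inner_diff_left)
    ultimately show ?thesis
      using L abs_triangle_ineq[of "(x - a) \<bullet> b" "a \<bullet> b - lattice_round L a \<bullet> b"] by linarith
  qed
  then have "x \<in> cube (sum_list (take (length ss) ss)) (2 * L)"
    using assms(2) by (simp add: cube_def)
  then show ?thesis unfolding path_cover_def by blast
qed

text \<open>If \<open>x\<close> is far from the anchor \<open>a\<close>, append lattice steps up to the rounding of \<open>x\<close>;
  their cost in \<open>L * length\<close> is paid by the drop of \<open>2 * norm (x - a)\<close> to \<open>0\<close>.\<close>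

lemma path_cover_extend:
  assumes L: "L > 0" and ss: "set ss \<subseteq> lattice_steps L" "sum_list ss = lattice_round L a"
  shows "\<exists>a' ss'. set ss' \<subseteq> lattice_steps L \<and> sum_list ss' = lattice_round L a'
    \<and> L * length ss' + 2 * norm (x - a') \<le> L * length ss + 2 * norm (x - (a::'a::euclidean_space))
    \<and> insert x (path_cover L ss) \<subseteq> path_cover L ss'"
proof (cases "norm (x - a) \<le> L")
  case True
  then show ?thesis
    using ss in_path_cover_if_near[OF L ss(2) True] by blast
next
  case False
  define k where "k = nat \<lceil>norm (x - a) / L\<rceil>"
  have k: "real k = of_int \<lceil>norm (x - a) / L\<rceil>" unfolding k_def using L by simp
  have "norm (x - a) / L \<le> real k" unfolding k by linarith
  then have "norm (x - a) \<le> real k * L" using L by (simp add: divide_le_eq)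
  from lattice_path_between[OF L this] obtain seg where seg: "set seg \<subseteq> lattice_steps L"
    "length seg = k" "sum_list seg = lattice_round L x - lattice_round L a"
    by blast
  have "real k < norm (x - a) / L + 1" unfolding k by linarith
  then have "L * real k < norm (x - a) + L" using L by (simp add: field_simps)
  then have "L * length (ss @ seg) + 2 * norm (x - x) \<le> L * length ss + 2 * norm (x - a)"
    using False seg(2) by (simp add: distrib_left)
  moreover have "x \<in> path_cover L (ss @ seg)"
    using ss(2) seg(3) L by (intro in_path_cover_if_near[OF L, of _ x]) simp_all
  ultimately show ?thesis
    using ss seg path_cover_append[of L ss seg]
    by (intro exI[of _ x] exI[of _ "ss @ seg"]) auto
qed

lemma walk_path_cover:
  assumes L: "L > 0"
  shows "w \<noteq> [] \<Longrightarrow> hd w = 0 \<Longrightarrow> \<exists>a ss. set ss \<subseteq> lattice_steps L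
    \<and> sum_list ss = lattice_round L (a::'a::euclidean_space)
    \<and> L * length ss + 2 * norm (last w - a) \<le> 2 * walk_length w \<and> set w \<subseteq> path_cover L ss"
proof (induction w rule: rev_induct)
  case (snoc x w)
  show ?case
  proof (cases "w = []")
    case True
    then have "x = 0" using snoc.prems by simp
    moreover have "0 \<in> path_cover L ([] :: 'a list)"
      using in_path_cover_if_near[OF L, of "[]" 0 0] L by simp
    ultimately show ?thesis
      using True by (intro exI[of _ 0] exI[of _ "[]"]) simp
  next
    case False
    then obtain a ss where ss: "set ss \<subseteq> lattice_steps L" "sum_list ss = lattice_round L a"
      "L * length ss + 2 * norm (last w - a) \<le> 2 * walk_length w" "set w \<subseteq> path_cover L ss"
      using snoc by auto
    from path_cover_extend[OF L ss(1,2), of x] obtain a' ss' where ss':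
      "set ss' \<subseteq> lattice_steps L" "sum_list ss' = lattice_round L a'"
      "L * length ss' + 2 * norm (x - a') \<le> L * length ss + 2 * norm (x - a)"
      "insert x (path_cover L ss) \<subseteq> path_cover L ss'"
      by blast
    have "norm (x - a) \<le> norm (last w - x) + norm (last w - a)"
      using norm_triangle_ineq[of "x - last w" "last w - a"] by (simp add: norm_minus_commute)
    then have "L * length ss' + 2 * norm (x - a') \<le> 2 * walk_length (w @ [x])"
      using ss(3) ss'(3) walk_length_snoc[OF False, of x] by linarith
    then show ?thesis
      using ss(4) ss'(1,2,4) by (intro exI[of _ a'] exI[of _ ss']) auto
  qed
qed simp

lemma animal_path_cover:
  fixes V :: "'a::euclidean_space set"
  assumes L: "L > 0" and an: "animal V E" and "0 \<in> V" and len: "animal_length E \<le> l"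
  shows "\<exists>ss. set ss \<subseteq> lattice_steps L \<and> length ss = nat \<lfloor>4 * l / L\<rfloor> \<and> V \<subseteq> path_cover L ss"
proof -
  obtain w where w: "hd w = 0" "set w = V" "walk_length w \<le> 2 * animal_length E"
    using animal_spanning_walk[OF an \<open>0 \<in> V\<close>] by blast
  moreover have "w \<noteq> []" using w(2) \<open>0 \<in> V\<close> by auto
  ultimately obtain a ss where ss: "set ss \<subseteq> lattice_steps L" "V \<subseteq> path_cover L ss"
    "L * length ss + 2 * norm (last w - a) \<le> 2 * walk_length w"
    using walk_path_cover[OF L] by blast
  then have "L * length ss \<le> 4 * l" using w(3) len norm_ge_zero[of "last w - a"] by linarith
  then have "length ss \<le> nat \<lfloor>4 * l / L\<rfloor>"
    using L by (simp add: le_nat_floor le_divide_eq mult.commute)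
  then show ?thesis
    using ss zero_in_lattice_steps path_cover_append[of L ss]
    by (intro exI[of _ "ss @ replicate (nat \<lfloor>4 * l / L\<rfloor> - length ss) 0"]) fastforce
qed

lemma cube_eq_cbox: "cube c r = cbox (c - r *\<^sub>R One) (c + r *\<^sub>R One)"
  unfolding cube_def cbox_def by (auto simp: inner_diff_left inner_add_left abs_le_iff)

lemma emeasure_cube:
  "r \<ge> 0 \<Longrightarrow> emeasure lborel (cube (c::'a::euclidean_space) r) = ennreal ((2 * r) ^ DIM('a))"
  unfolding cube_eq_cbox by (simp add: emeasure_lborel_cbox_eq inner_diff_left inner_add_left)

lemma path_cover_sets [measurable]: "path_cover L ss \<in> sets lborel"
  unfolding path_cover_def cube_eq_cbox by auto

lemma emeasure_path_cover_le:
  assumes "L \<ge> 0"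
  shows "emeasure lborel (path_cover L (ss::'a::euclidean_space list))
    \<le> ennreal ((real (length ss) + 1) * (4 * L) ^ DIM('a))"
proof -
  have "emeasure lborel (path_cover L ss)
      \<le> (\<Sum>i\<le>length ss. emeasure lborel (cube (sum_list (take i ss)) (2 * L)))"
    unfolding path_cover_def by (intro emeasure_subadditive_finite) (auto simp: cube_eq_cbox)
  also have "\<dots> = (\<Sum>i\<le>length ss. ennreal ((4 * L) ^ DIM('a)))"
    using assms by (simp add: emeasure_cube)
  also have "\<dots> = ennreal ((real (length ss) + 1) * (4 * L) ^ DIM('a))"
    using assms by (simp add: ennreal_of_nat_eq_real_of_nat ennreal_mult add.commute)
  finally show ?thesis .
qed

section \<open>Exponential moments of Poisson counts\<close>

lemma poisson_exp_sums:
  fixes a c :: real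
  shows "(\<lambda>n. exp (a * real n) * (exp (- c) * c ^ n / fact n)) sums exp (c * (exp a - 1))"
proof -
  have "(\<lambda>n. exp (- c) * ((c * exp a) ^ n /\<^sub>R fact n)) sums (exp (- c) * exp (c * exp a))"
    by (intro sums_mult exp_converges)
  moreover have "exp (- c) * ((c * exp a) ^ n /\<^sub>R fact n) = exp (a * real n) * (exp (- c) * c ^ n / fact n)"
    for n :: nat
    by (simp add: power_mult_distrib exp_of_nat_mult[symmetric] divide_inverse ac_simps)
  moreover have "exp (- c) * exp (c * exp a) = exp (c * (exp a - 1))"
    by (simp add: exp_add[symmetric] algebra_simps)
  ultimately show ?thesis by simp
qed

context prob_space
begin

lemma AE_poisson_finite:
  fixes X :: "'a \<Rightarrow> ennreal"
  assumes X [measurable]: "X \<in> borel_measurable M"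
    and pr: "\<And>n::nat. prob {\<omega> \<in> space M. X \<omega> = of_nat n} = exp (- c) * c ^ n / fact n"
  shows "AE \<omega> in M. \<exists>n::nat. X \<omega> = of_nat n"
proof -
  define E where "E n = {\<omega> \<in> space M. X \<omega> = of_nat n}" for n :: nat
  have [measurable]: "E n \<in> sets M" for n unfolding E_def by measurable
  have "(\<lambda>n. prob (E n)) sums prob (\<Union>n. E n)"
    by (rule finite_measure_UNION) (auto simp: disjoint_family_on_def E_def)
  moreover have "(\<lambda>n. prob (E n)) sums 1"
    using poisson_exp_sums[of 0 c] by (simp add: E_def pr)
  ultimately have "prob (\<Union>n. E n) = 1" by (rule sums_unique2)
  then have "AE \<omega> in M. \<omega> \<in> (\<Union>n. E n)" by (rule AE_prob_1)
  then show ?thesis by eventually_elim (auto simp: E_def)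
qed

lemma nn_integral_exp_poisson:
  fixes X :: "'a \<Rightarrow> ennreal"
  assumes X [measurable]: "X \<in> borel_measurable M" and c: "c \<ge> 0"
    and pr: "\<And>n::nat. prob {\<omega> \<in> space M. X \<omega> = of_nat n} = exp (- c) * c ^ n / fact n"
  shows "(\<integral>\<^sup>+ \<omega>. ennreal (exp (a * enn2real (X \<omega>))) \<partial>M) = ennreal (exp (c * (exp a - 1)))"
proof -
  define E where "E n = {\<omega> \<in> space M. X \<omega> = of_nat n}" for n :: nat
  have [measurable]: "E n \<in> sets M" for n unfolding E_def by measurable
  have "AE \<omega> in M. ennreal (exp (a * enn2real (X \<omega>)))
      = (\<Sum>n. ennreal (exp (a * real n)) * indicator (E n) \<omega>)"
    using AE_poisson_finite[OF X pr] AE_space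
  proof eventually_elim
    case (elim \<omega>)
    then obtain k :: nat where "X \<omega> = of_nat k" by blast
    moreover have "indicator (E n) \<omega> = (if n = k then 1 else (0::ennreal))" for n
      using \<open>X \<omega> = of_nat k\<close> elim by (auto simp: E_def indicator_def)
    ultimately show ?case by (subst suminf_finite[of "{k}"]) auto
  qed
  then have "(\<integral>\<^sup>+ \<omega>. ennreal (exp (a * enn2real (X \<omega>))) \<partial>M)
      = (\<Sum>n. \<integral>\<^sup>+ \<omega>. ennreal (exp (a * real n)) * indicator (E n) \<omega> \<partial>M)"
    by (simp add: nn_integral_cong_AE nn_integral_suminf)
  also have "\<dots> = (\<Sum>n. ennreal (exp (a * real n)) * ennreal (exp (- c) * c ^ n / fact n))"
    by (simp add: nn_integral_cmult_indicator emeasure_eq_measure E_def pr)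
  also have "\<dots> = (\<Sum>n. ennreal (exp (a * real n) * (exp (- c) * c ^ n / fact n)))"
    by (intro suminf_cong, subst ennreal_mult) (use c in auto)
  also have "\<dots> = ennreal (exp (c * (exp a - 1)))"
    using c by (intro suminf_ennreal_eq poisson_exp_sums) simp
  finally show ?thesis .
qed

lemma emeasure_greater_le_exp_moment:
  fixes Y :: "'a \<Rightarrow> ennreal"
  assumes Y [measurable]: "Y \<in> borel_measurable M" and fin: "AE \<omega> in M. Y \<omega> \<noteq> \<infinity>"
    and lam: "lam \<ge> 0"
  shows "emeasure M {\<omega> \<in> space M. ennreal x < Y \<omega>}
    \<le> ennreal (exp (- lam * x)) * (\<integral>\<^sup>+ \<omega>. ennreal (exp (lam * enn2real (Y \<omega>))) \<partial>M)"
proof -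
  define A where "A = {\<omega> \<in> space M. ennreal x < Y \<omega>}"
  have [measurable]: "A \<in> sets M" unfolding A_def by measurable
  have "AE \<omega> in M. ennreal (exp (lam * x)) * indicator A \<omega> \<le> ennreal (exp (lam * enn2real (Y \<omega>)))"
    using fin
  proof eventually_elim
    case (elim \<omega>)
    obtain r where r: "Y \<omega> = ennreal r" "0 \<le> r" using elim by (cases "Y \<omega>") auto
    have "x < enn2real (Y \<omega>)" if "\<omega> \<in> A"
      using that r unfolding A_def by (cases "x \<ge> 0") (auto simp: ennreal_less_iff)
    then show ?case using lam by (auto simp: indicator_def mult_left_mono)
  qed
  then have "ennreal (exp (lam * x)) * emeasure M A \<le> (\<integral>\<^sup>+ \<omega>. ennreal (exp (lam * enn2real (Y \<omega>))) \<partial>M)"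
    by (subst nn_integral_cmult_indicator[symmetric]) (auto intro: nn_integral_mono_AE)
  then have "ennreal (exp (- lam * x)) * (ennreal (exp (lam * x)) * emeasure M A)
      \<le> ennreal (exp (- lam * x)) * (\<integral>\<^sup>+ \<omega>. ennreal (exp (lam * enn2real (Y \<omega>))) \<partial>M)"
    by (rule mult_left_mono) simp
  then show ?thesis
    by (simp add: A_def mult.assoc[symmetric] ennreal_mult[symmetric] exp_add[symmetric])
qed

end

locale poisson_process =
  fixes nu :: "real measure" and M :: "'w measure"
    and PP :: "'w \<Rightarrow> ('a::euclidean_space \<times> real) \<Rightarrow> nat"
  assumes poisson: "poisson_pp M nu PP"
begin

sublocale prob_space M
  using poisson unfolding poisson_pp_def by blast

lemma count_in_measurable [measurable]:
  "B \<in> sets (lborel \<Otimes>\<^sub>M nu) \<Longrightarrow> (\<lambda>\<omega>. count_in (PP \<omega>) B) \<in> borel_measurable M"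
  using poisson unfolding poisson_pp_def by blast

lemma prob_count_in_eq:
  "B \<in> sets (lborel \<Otimes>\<^sub>M nu) \<Longrightarrow> emeasure (lborel \<Otimes>\<^sub>M nu) B < \<infinity> \<Longrightarrow>
    prob {\<omega> \<in> space M. count_in (PP \<omega>) B = of_nat n}
      = exp (- enn2real (emeasure (lborel \<Otimes>\<^sub>M nu) B))
        * enn2real (emeasure (lborel \<Otimes>\<^sub>M nu) B) ^ n / fact n"
  using poisson unfolding poisson_pp_def by blast

lemma AE_count_in_finite:
  assumes "B \<in> sets (lborel \<Otimes>\<^sub>M nu)" "emeasure (lborel \<Otimes>\<^sub>M nu) B < \<infinity>"
  shows "AE \<omega> in M. count_in (PP \<omega>) B \<noteq> \<infinity>"
  using AE_poisson_finite[OF count_in_measurable[OF assms(1)] prob_count_in_eq[OF assms]]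
  by eventually_elim (metis ennreal_of_nat_neq_top infinity_ennreal_def)

lemma indep_count_in:
  fixes I :: "nat set"
  assumes "finite I" "\<And>i. i \<in> I \<Longrightarrow> B i \<in> sets (lborel \<Otimes>\<^sub>M nu)" "disjoint_family_on B I"
  shows "indep_vars (\<lambda>_. borel) (\<lambda>i \<omega>. count_in (PP \<omega>) (B i)) I"
proof -
  have "\<forall>(I::nat set) B. finite I \<longrightarrow> (\<forall>i\<in>I. B i \<in> sets (lborel \<Otimes>\<^sub>M nu)) \<longrightarrow>
      disjoint_family_on B I \<longrightarrow> indep_vars (\<lambda>_. borel) (\<lambda>i \<omega>. count_in (PP \<omega>) (B i)) I"
    using poisson unfolding poisson_pp_def by (elim conjE) assumption
  from this[rule_format, OF assms] show ?thesis .
qed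

lemma nn_integral_exp_count_in:
  assumes "B \<in> sets (lborel \<Otimes>\<^sub>M nu)" "emeasure (lborel \<Otimes>\<^sub>M nu) B < \<infinity>"
  shows "(\<integral>\<^sup>+ \<omega>. ennreal (exp (a * enn2real (count_in (PP \<omega>) B))) \<partial>M)
    = ennreal (exp (enn2real (emeasure (lborel \<Otimes>\<^sub>M nu) B) * (exp a - 1)))"
  by (rule nn_integral_exp_poisson[OF count_in_measurable[OF assms(1)] enn2real_nonneg
        prob_count_in_eq[OF assms]])

lemma nn_integral_prod_exp_count_in:
  fixes I :: "nat set"
  assumes I: "finite I" and B: "\<And>i. i \<in> I \<Longrightarrow> B i \<in> sets (lborel \<Otimes>\<^sub>M nu)"
    "\<And>i. i \<in> I \<Longrightarrow> emeasure (lborel \<Otimes>\<^sub>M nu) (B i) < \<infinity>"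
    and disj: "disjoint_family_on B I"
  shows "(\<integral>\<^sup>+ \<omega>. (\<Prod>i\<in>I. ennreal (exp (a i * enn2real (count_in (PP \<omega>) (B i))))) \<partial>M)
    = (\<Prod>i\<in>I. ennreal (exp (enn2real (emeasure (lborel \<Otimes>\<^sub>M nu) (B i)) * (exp (a i) - 1))))"
proof -
  have "indep_vars (\<lambda>_. borel) (\<lambda>i \<omega>. count_in (PP \<omega>) (B i)) I"
    by (rule indep_count_in[OF I B(1) disj])
  then have "indep_vars (\<lambda>_. borel) (\<lambda>i \<omega>. ennreal (exp (a i * enn2real (count_in (PP \<omega>) (B i))))) I"
    using indep_vars_compose2[of "\<lambda>_. borel" _ I "\<lambda>i c. ennreal (exp (a i * enn2real c))" "\<lambda>_. borel"]
    by simp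
  then have "(\<integral>\<^sup>+ \<omega>. (\<Prod>i\<in>I. ennreal (exp (a i * enn2real (count_in (PP \<omega>) (B i))))) \<partial>M)
      = (\<Prod>i\<in>I. \<integral>\<^sup>+ \<omega>. ennreal (exp (a i * enn2real (count_in (PP \<omega>) (B i)))) \<partial>M)"
    by (rule indep_vars_nn_integral[OF I]) simp
  also have "\<dots> = (\<Prod>i\<in>I. ennreal (exp (enn2real (emeasure (lborel \<Otimes>\<^sub>M nu) (B i)) * (exp (a i) - 1))))"
    using B by (intro prod.cong refl) (rule nn_integral_exp_count_in)
  finally show ?thesis .
qed

lemma emeasure_weighted_count_greater:
  fixes I :: "nat set"
  assumes I: "finite I" and B: "\<And>i. i \<in> I \<Longrightarrow> B i \<in> sets (lborel \<Otimes>\<^sub>M nu)"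
    "\<And>i. i \<in> I \<Longrightarrow> emeasure (lborel \<Otimes>\<^sub>M nu) (B i) < \<infinity>"
    and disj: "disjoint_family_on B I" and c: "\<And>i. i \<in> I \<Longrightarrow> c i \<ge> 0" and lam: "lam \<ge> 0"
  shows "emeasure M {\<omega> \<in> space M. ennreal x < (\<Sum>i\<in>I. ennreal (c i) * count_in (PP \<omega>) (B i))}
    \<le> ennreal (exp (- lam * x)) *
      (\<Prod>i\<in>I. ennreal (exp (enn2real (emeasure (lborel \<Otimes>\<^sub>M nu) (B i)) * (exp (lam * c i) - 1))))"
proof -
  define Y where "Y \<omega> = (\<Sum>i\<in>I. ennreal (c i) * count_in (PP \<omega>) (B i))" for \<omega>
  have Y: "Y \<in> borel_measurable M"
    unfolding Y_def using B(1) by measurable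
  have fin: "AE \<omega> in M. \<forall>i\<in>I. count_in (PP \<omega>) (B i) \<noteq> \<infinity>"
    using I B by (intro AE_finite_allI AE_count_in_finite)
  then have finY: "AE \<omega> in M. Y \<omega> \<noteq> \<infinity>"
    by eventually_elim (simp add: Y_def I ennreal_mult_eq_top_iff)
  have "AE \<omega> in M. ennreal (exp (lam * enn2real (Y \<omega>)))
      = (\<Prod>i\<in>I. ennreal (exp (lam * c i * enn2real (count_in (PP \<omega>) (B i)))))"
    using fin
  proof eventually_elim
    case (elim \<omega>)
    have "enn2real (Y \<omega>) = (\<Sum>i\<in>I. enn2real (ennreal (c i) * count_in (PP \<omega>) (B i)))"
      unfolding Y_def using elim by (subst enn2real_sum) (auto simp: ennreal_mult_less_top less_top)
    also have "\<dots> = (\<Sum>i\<in>I. c i * enn2real (count_in (PP \<omega>) (B i)))"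
      using c by (intro sum.cong) (simp_all add: enn2real_mult)
    finally have "exp (lam * enn2real (Y \<omega>)) = (\<Prod>i\<in>I. exp (lam * c i * enn2real (count_in (PP \<omega>) (B i))))"
      using I by (simp add: sum_distrib_left exp_sum mult.assoc)
    then show ?case by (simp add: prod_ennreal)
  qed
  then have mom: "(\<integral>\<^sup>+ \<omega>. ennreal (exp (lam * enn2real (Y \<omega>))) \<partial>M)
      = (\<Prod>i\<in>I. ennreal (exp (enn2real (emeasure (lborel \<Otimes>\<^sub>M nu) (B i)) * (exp (lam * c i) - 1))))"
    by (simp add: nn_integral_cong_AE nn_integral_prod_exp_count_in[OF I B disj])
  have "emeasure M {\<omega> \<in> space M. ennreal x < Y \<omega>}
      \<le> ennreal (exp (- lam * x)) * (\<integral>\<^sup>+ \<omega>. ennreal (exp (lam * enn2real (Y \<omega>))) \<partial>M)"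
    by (rule emeasure_greater_le_exp_moment[OF Y finY lam])
  then show ?thesis
    unfolding mom by (simp only: Y_def)
qed

end

section \<open>Mass above height m and slab counts\<close>

definition slab :: "'a set \<Rightarrow> real \<Rightarrow> nat \<Rightarrow> ('a \<times> real) set" where
  "slab U m j = U \<times> {m + real j <.. m + real j + 1}"

definition slab_weight :: "'a set \<Rightarrow> real \<Rightarrow> ('a \<times> real \<Rightarrow> nat) \<Rightarrow> ennreal" where
  "slab_weight U m N = (\<Sum>j. ennreal (real j + 1) * count_in N (slab U m j))"

definition shifted_exp_tail :: "real \<Rightarrow> real \<Rightarrow> real \<Rightarrow> ennreal" where
  "shifted_exp_tail lam m t = ennreal (exp (lam * (t - m + 1)) - 1) * indicator {m<..} t"

lemma disjoint_family_slab: "disjoint_family (slab U m)"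
  unfolding disjoint_family_on_def
proof (intro ballI impI)
  fix i j :: nat assume "i \<noteq> j"
  then have "real i + 1 \<le> real j \<or> real j + 1 \<le> real i" by linarith
  then show "slab U m i \<inter> slab U m j = {}" unfolding slab_def by auto
qed

lemma height_le_slab_weights:
  assumes "x \<in> U" "s > 0"
  shows "ennreal s \<le> (\<Sum>j. ennreal (real j + 1) * indicator (slab U m j) (x, s + m))"
proof -
  define j where "j = nat \<lceil>s\<rceil> - 1"
  have j: "real j = of_int \<lceil>s\<rceil> - 1" unfolding j_def using assms(2) by linarith
  then have "(x, s + m) \<in> slab U m j" "s \<le> real j + 1"
    using assms ceiling_correct[of s] unfolding slab_def by auto
  define f where "f i = ennreal (real i + 1) * indicator (slab U m i) (x, s + m)" for i
  have "ennreal s \<le> f j"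
    using \<open>(x, s + m) \<in> slab U m j\<close> \<open>s \<le> real j + 1\<close> unfolding f_def
    by (simp only: indicator_simps mult_1_right ennreal_leI)
  also have "\<dots> \<le> suminf f"
    using sum_le_suminf[of f "{j}"] by simp
  finally show ?thesis unfolding f_def .
qed

lemma Pi2_of_pos:
  assumes "s > 0"
  shows "Pi2 m N (x, s) = of_nat (N (x, s + m))"
proof -
  have "(\<lambda>(y, t). (y, max (t - m) 0)) -` {(x, s)} = {(x, s + m)}"
    using assms by (auto simp: max_def split: if_splits)
  then show ?thesis unfolding Pi2_def push_def by simp
qed

text \<open>A point of \<open>Pi2 m N\<close> at height \<open>s > 0\<close> comes from a point of \<open>N\<close> at height
  \<open>s + m\<close>, which lies in the slab numbered \<open>\<lceil>s\<rceil> - 1\<close>, of weight \<open>\<lceil>s\<rceil> \<ge> s\<close>.\<close>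

lemma mass_Pi2_le_slab_weight:
  assumes "V \<subseteq> U"
  shows "mass V (Pi2 m N) \<le> slab_weight U m N"
proof -
  define h where "h p = of_nat (N p) * (\<Sum>j. ennreal (real j + 1) * indicator (slab U m j) p)" for p
  define shift where "shift q = (fst q, snd q + m)" for q :: "'a \<times> real"
  have "Pi2 m N (x, s) * ennreal s * indicator (V \<times> {0..}) (x, s) \<le> h (shift (x, s))" for x s
  proof (cases "s > 0 \<and> x \<in> V")
    case True
    then have "ennreal s \<le> (\<Sum>j. ennreal (real j + 1) * indicator (slab U m j) (x, s + m))"
      using assms by (intro height_le_slab_weights) auto
    then show ?thesis
      using True by (simp add: Pi2_of_pos h_def shift_def mult_left_mono)
  qed (auto simp: indicator_def ennreal_eq_0_iff)
  then have "mass V (Pi2 m N) \<le> (\<integral>\<^sup>+ q. h (shift q) \<partial>count_space UNIV)"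
    unfolding mass_def by (intro nn_integral_mono) (metis prod.collapse)
  also have "\<dots> = (\<integral>\<^sup>+ p. h p \<partial>count_space UNIV)"
    by (rule nn_integral_bij_count_space)
       (rule bij_betwI[of shift UNIV UNIV "\<lambda>q. (fst q, snd q - m)"]; simp add: shift_def)
  also have "\<dots> = (\<integral>\<^sup>+ p. (\<Sum>j. ennreal (real j + 1) * (of_nat (N p) * indicator (slab U m j) p))
      \<partial>count_space UNIV)"
    unfolding h_def ennreal_suminf_cmult[symmetric] by (simp only: mult.left_commute)
  also have "\<dots> = (\<Sum>j. \<integral>\<^sup>+ p. ennreal (real j + 1) * (of_nat (N p) * indicator (slab U m j) p) \<partial>count_space UNIV)"
    by (rule nn_integral_suminf) simp
  also have "\<dots> = slab_weight U m N"
    unfolding slab_weight_def count_in_def by (intro suminf_cong nn_integral_cmult) simp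
  finally show ?thesis .
qed

lemma sum_exp_indicator_le_shifted_exp_tail:
  assumes lam: "lam \<ge> 0"
  shows "(\<Sum>j<J. ennreal (exp (lam * (real j + 1)) - 1) * indicator {m + real j <.. m + real j + 1} t)
    \<le> shifted_exp_tail lam m t"
    (is "sum ?g {..<J} \<le> _")
proof (cases "\<exists>j<J. t \<in> {m + real j <.. m + real j + 1}")
  case True
  then obtain j where j: "j < J" "t \<in> {m + real j <.. m + real j + 1}" by blast
  have "?g i = 0" if "i \<noteq> j" for i
  proof -
    have "t \<notin> {m + real i <.. m + real i + 1}"
      using j(2) that by auto
    then show ?thesis by simp
  qed
  then have "sum ?g ({..<J} - {j}) = 0"
    by (intro sum.neutral) auto
  moreover have "sum ?g {..<J} = ?g j + sum ?g ({..<J} - {j})"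
    using j(1) by (intro sum.remove) auto
  ultimately have "sum ?g {..<J} = ?g j" by simp
  also have "\<dots> \<le> shifted_exp_tail lam m t"
    using j(2) lam by (auto simp: shifted_exp_tail_def intro!: ennreal_leI mult_left_mono)
  finally show ?thesis .
qed (simp add: sum.neutral)

text \<open>Monotone convergence: the tails decrease to \<open>0\<close> as \<open>m \<rightarrow> \<infinity>\<close> and the first one is
  dominated by the exponential moment.\<close>

lemma shifted_exp_tail_small:
  fixes nu :: "real measure"
  assumes nu_sets: "sets nu = sets borel" and lam: "lam \<ge> 0"
    and moment: "(\<integral>\<^sup>+ t \<in> {0<..}. ennreal (exp (lam * t) - 1) \<partial>nu) < \<infinity>" and \<eta>: "\<eta> > 0"
  shows "\<exists>m\<ge>1. (\<integral>\<^sup>+ t. shifted_exp_tail lam m t \<partial>nu) < ennreal \<eta>"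
proof -
  define F where "F n t = shifted_exp_tail lam (real n + 1) t" for n t
  have [measurable]: "F n \<in> borel_measurable nu" for n
    unfolding measurable_cong_sets[OF nu_sets refl] F_def shifted_exp_tail_def by measurable
  have "decseq F"
  proof (rule decseq_SucI, rule le_funI)
    fix n t
    have "exp (lam * (t - (real (Suc n) + 1) + 1)) \<le> exp (lam * (t - (real n + 1) + 1))"
      using lam by (simp add: mult_left_mono)
    then show "F (Suc n) t \<le> F n t"
      unfolding F_def shifted_exp_tail_def by (auto simp: indicator_def intro: ennreal_leI)
  qed
  moreover have "(\<integral>\<^sup>+ t. F 0 t \<partial>nu) < \<infinity>"
  proof -
    have "(\<integral>\<^sup>+ t. F 0 t \<partial>nu) \<le> (\<integral>\<^sup>+ t \<in> {0<..}. ennreal (exp (lam * t) - 1) \<partial>nu)"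
      by (intro nn_integral_mono) (simp add: F_def shifted_exp_tail_def indicator_def)
    then show ?thesis using moment by (rule order.strict_trans1)
  qed
  ultimately have "(\<integral>\<^sup>+ t. (INF n. F n t) \<partial>nu) = (INF n. \<integral>\<^sup>+ t. F n t \<partial>nu)"
    by (intro nn_integral_monotone_convergence_INF_decseq) simp_all
  moreover have "(INF n. F n t) = 0" for t
  proof -
    have "t \<le> real (nat \<lceil>t\<rceil>) + 1" by linarith
    then have "F (nat \<lceil>t\<rceil>) t = 0" unfolding F_def shifted_exp_tail_def by simp
    then show ?thesis by (metis INF_lower UNIV_I le_zero_eq)
  qed
  ultimately have "(INF n. \<integral>\<^sup>+ t. F n t \<partial>nu) < ennreal \<eta>" using \<eta> by simp
  then obtain n where "(\<integral>\<^sup>+ t. F n t \<partial>nu) < ennreal \<eta>" by (auto simp: INF_less_iff)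
  then show ?thesis unfolding F_def by (intro exI[of _ "real n + 1"]) simp
qed

lemma sigma_finite_measure_finite_on_positive_intervals:
  fixes nu :: "real measure"
  assumes nu_sets: "sets nu = sets borel" and nu_support: "emeasure nu {..0} = 0"
    and nu_locfin: "\<forall>a b. 0 < a \<longrightarrow> a \<le> b \<longrightarrow> emeasure nu {a..b} < \<infinity>"
  shows "sigma_finite_measure nu"
proof
  define A where "A = insert {..0::real} (range (\<lambda>n::nat. {1 / (real n + 1) .. real n + 1}))"
  have "t \<in> \<Union>A" for t
  proof (cases "t > 0")
    case True
    define n where "n = nat \<lceil>t + 1 / t\<rceil>"
    have "t + 1 / t \<le> real n" unfolding n_def by linarith
    moreover have "1 / t > 0" using True by simp
    ultimately have "t \<le> real n + 1" "1 / t \<le> real n + 1" using True by linarith+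
    have "1 / (real n + 1) \<le> 1 / (1 / t)"
      by (rule divide_left_mono[OF \<open>1 / t \<le> real n + 1\<close>]) (use True in simp_all)
    then have "t \<in> {1 / (real n + 1) .. real n + 1}"
      using \<open>t \<le> real n + 1\<close> by simp
    then show ?thesis unfolding A_def by blast
  next
    case False
    then have "t \<in> {..0}" by simp
    then show ?thesis unfolding A_def by blast
  qed
  moreover have "space nu = UNIV"
    using sets_eq_imp_space_eq[OF nu_sets] by simp
  ultimately have "\<Union>A = space nu" by blast
  moreover have "emeasure nu a \<noteq> \<infinity>" if a: "a \<in> A" for a
  proof -
    consider "a = {..0}" | n :: nat where "a = {1 / (real n + 1) .. real n + 1}"
      using a unfolding A_def by blast
    then show ?thesis
    proof cases
      case (2 n)
      have "1 / (real n + 1) \<le> real n + 1"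
        by (rule order.trans[of _ 1]) simp_all
      then show ?thesis
        using nu_locfin[rule_format, of "1 / (real n + 1)" "real n + 1"] 2 by simp
    qed (simp add: nu_support)
  qed
  moreover have "countable A"
    unfolding A_def by (intro countable_insert countable_image) simp
  moreover have "A \<subseteq> sets nu"
    unfolding A_def nu_sets by auto
  ultimately show "\<exists>A. countable A \<and> A \<subseteq> sets nu \<and> \<Union>A = space nu \<and> (\<forall>a\<in>A. emeasure nu a \<noteq> \<infinity>)"
    by blast
qed

locale marked_poisson_process = poisson_process nu M PP
  for nu :: "real measure" and M :: "'w measure" and PP :: "'w \<Rightarrow> ('a::euclidean_space \<times> real) \<Rightarrow> nat" +
  assumes nu_sets: "sets nu = sets borel"
    and nu_support: "emeasure nu {..0} = 0"
    and nu_locfin: "\<forall>a b. 0 < a \<longrightarrow> a \<le> b \<longrightarrow> emeasure nu {a..b} < \<infinity>"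
begin

sublocale nu: sigma_finite_measure nu
  by (rule sigma_finite_measure_finite_on_positive_intervals[OF nu_sets nu_support nu_locfin])

lemma emeasure_nu_interval_finite:
  assumes "a > 0"
  shows "emeasure nu {a<..b} < \<infinity>"
proof (cases "a \<le> b")
  case True
  have "emeasure nu {a<..b} \<le> emeasure nu {a..b}"
    using nu_sets by (intro emeasure_mono) auto
  also have "\<dots> < \<infinity>" using nu_locfin assms True by simp
  finally show ?thesis .
qed simp

lemma slab_sets: "U \<in> sets lborel \<Longrightarrow> slab U m j \<in> sets (lborel \<Otimes>\<^sub>M nu)"
  unfolding slab_def using nu_sets by (intro pair_measureI) simp_all

lemma emeasure_slab:
  "U \<in> sets lborel \<Longrightarrow>
    emeasure (lborel \<Otimes>\<^sub>M nu) (slab U m j) = emeasure lborel U * emeasure nu {m + real j <.. m + real j + 1}"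
  unfolding slab_def using nu_sets by (intro nu.emeasure_pair_measure_Times) simp_all

lemma emeasure_slab_finite:
  assumes "U \<in> sets lborel" "emeasure lborel U < \<infinity>" "m > 0"
  shows "emeasure (lborel \<Otimes>\<^sub>M nu) (slab U m j) < \<infinity>"
  using assms emeasure_nu_interval_finite[of "m + real j"]
  by (simp add: emeasure_slab ennreal_mult_less_top)

lemma slab_weight_measurable:
  assumes "U \<in> sets lborel"
  shows "(\<lambda>\<omega>. slab_weight U m (PP \<omega>)) \<in> borel_measurable M"
proof -
  have [measurable]: "slab U m j \<in> sets (lborel \<Otimes>\<^sub>M nu)" for j
    using assms by (rule slab_sets)
  show ?thesis unfolding slab_weight_def by measurable
qed

lemma sum_interval_exp_le_shifted_exp_tail:
  assumes m: "m > 0" and lam: "lam \<ge> 0" and fin: "(\<integral>\<^sup>+ t. shifted_exp_tail lam m t \<partial>nu) < \<infinity>"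
  shows "(\<Sum>j<J. enn2real (emeasure nu {m + real j <.. m + real j + 1}) * (exp (lam * (real j + 1)) - 1))
    \<le> enn2real (\<integral>\<^sup>+ t. shifted_exp_tail lam m t \<partial>nu)"
proof -
  let ?I = "\<lambda>j. {m + real j <.. m + real j + 1}" and ?d = "\<lambda>j. exp (lam * (real j + 1)) - 1"
  have d: "?d j \<ge> 0" for j using lam by simp
  have "ennreal (\<Sum>j<J. enn2real (emeasure nu (?I j)) * ?d j)
      = (\<Sum>j<J. ennreal (?d j) * emeasure nu (?I j))"
    using d emeasure_nu_interval_finite[of "m + real _"] m
    by (simp add: ennreal_mult'' ennreal_enn2real_if mult.commute less_top[symmetric] sum_ennreal[symmetric])
  also have "\<dots> = (\<Sum>j<J. \<integral>\<^sup>+ t. ennreal (?d j) * indicator (?I j) t \<partial>nu)"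
    using nu_sets by (intro sum.cong refl nn_integral_cmult_indicator[symmetric]) simp
  also have "\<dots> = (\<integral>\<^sup>+ t. (\<Sum>j<J. ennreal (?d j) * indicator (?I j) t) \<partial>nu)"
    using nu_sets by (intro nn_integral_sum[symmetric]) (simp add: measurable_cong_sets[OF nu_sets refl])
  also have "\<dots> \<le> (\<integral>\<^sup>+ t. shifted_exp_tail lam m t \<partial>nu)"
    by (intro nn_integral_mono sum_exp_indicator_le_shifted_exp_tail lam)
  finally have "enn2real (ennreal (\<Sum>j<J. enn2real (emeasure nu (?I j)) * ?d j))
      \<le> enn2real (\<integral>\<^sup>+ t. shifted_exp_tail lam m t \<partial>nu)"
    using fin by (intro enn2real_mono) simp_all
  moreover have "(\<Sum>j<J. enn2real (emeasure nu (?I j)) * ?d j) \<ge> 0"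
    using d by (intro sum_nonneg mult_nonneg_nonneg enn2real_nonneg)
  ultimately show ?thesis by simp
qed

lemma prod_exp_slab_le:
  assumes U: "U \<in> sets lborel" and m: "m > 0" and lam: "lam \<ge> 0"
    and fin: "(\<integral>\<^sup>+ t. shifted_exp_tail lam m t \<partial>nu) < \<infinity>"
  shows "(\<Prod>j<J. ennreal (exp (enn2real (emeasure (lborel \<Otimes>\<^sub>M nu) (slab U m j)) * (exp (lam * (real j + 1)) - 1))))
    \<le> ennreal (exp (enn2real (emeasure lborel U) * enn2real (\<integral>\<^sup>+ t. shifted_exp_tail lam m t \<partial>nu)))"
proof -
  let ?nu = "\<lambda>j. enn2real (emeasure nu {m + real j <.. m + real j + 1})"
    and ?d = "\<lambda>j. exp (lam * (real j + 1)) - 1"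
  have "(\<Prod>j<J. ennreal (exp (enn2real (emeasure (lborel \<Otimes>\<^sub>M nu) (slab U m j)) * ?d j)))
      = ennreal (exp (enn2real (emeasure lborel U) * (\<Sum>j<J. ?nu j * ?d j)))"
    using U by (simp add: emeasure_slab enn2real_mult prod_ennreal exp_sum sum_distrib_left mult.assoc)
  also have "\<dots> \<le> ennreal (exp (enn2real (emeasure lborel U) * enn2real (\<integral>\<^sup>+ t. shifted_exp_tail lam m t \<partial>nu)))"
    using sum_interval_exp_le_shifted_exp_tail[OF m lam fin, of J]
    by (intro ennreal_leI) (simp add: mult_left_mono)
  finally show ?thesis .
qed

lemma emeasure_slab_weight_greater:
  assumes U: "U \<in> sets lborel" "emeasure lborel U < \<infinity>" and m: "m > 0" and lam: "lam \<ge> 0"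
    and fin: "(\<integral>\<^sup>+ t. shifted_exp_tail lam m t \<partial>nu) < \<infinity>"
  shows "emeasure M {\<omega> \<in> space M. ennreal x < slab_weight U m (PP \<omega>)}
    \<le> ennreal (exp (- lam * x)) *
      ennreal (exp (enn2real (emeasure lborel U) * enn2real (\<integral>\<^sup>+ t. shifted_exp_tail lam m t \<partial>nu)))"
    (is "_ \<le> ?bound")
proof -
  define A where "A J = {\<omega> \<in> space M. ennreal x < (\<Sum>j<J. ennreal (real j + 1) * count_in (PP \<omega>) (slab U m j))}"
    for J
  have [measurable]: "slab U m j \<in> sets (lborel \<Otimes>\<^sub>M nu)" for j
    using U(1) by (rule slab_sets)
  have "A J \<in> sets M" for J
    unfolding A_def by measurable
  moreover have "incseq A"
  proof (rule monoI)
    fix J K :: nat assume "J \<le> K"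
    then have "(\<Sum>j<J. ennreal (real j + 1) * count_in (PP \<omega>) (slab U m j))
        \<le> (\<Sum>j<K. ennreal (real j + 1) * count_in (PP \<omega>) (slab U m j))" for \<omega>
      by (intro sum_mono2) auto
    then show "A J \<subseteq> A K"
      unfolding A_def by (auto intro: order.strict_trans2)
  qed
  ultimately have "(SUP J. emeasure M (A J)) = emeasure M (\<Union>J. A J)"
    by (intro SUP_emeasure_incseq) auto
  also have "(\<Union>J. A J) = {\<omega> \<in> space M. ennreal x < slab_weight U m (PP \<omega>)}"
    unfolding A_def slab_weight_def suminf_eq_SUP by (auto simp: less_SUP_iff)
  finally have "emeasure M {\<omega> \<in> space M. ennreal x < slab_weight U m (PP \<omega>)} = (SUP J. emeasure M (A J))"
    by simp
  also have "\<dots> \<le> ?bound"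
  proof (rule SUP_least)
    fix J
    have "emeasure M (A J) \<le> ennreal (exp (- lam * x)) *
      (\<Prod>j<J. ennreal (exp (enn2real (emeasure (lborel \<Otimes>\<^sub>M nu) (slab U m j)) * (exp (lam * (real j + 1)) - 1))))"
      unfolding A_def
      using lam slab_sets[OF U(1)] emeasure_slab_finite[OF U m]
        disjoint_family_on_mono[OF subset_UNIV disjoint_family_slab]
      by (intro emeasure_weighted_count_greater) auto
    also have "\<dots> \<le> ?bound"
      by (intro mult_left_mono prod_exp_slab_le U m lam fin) simp
    finally show "emeasure M (A J) \<le> ?bound" .
  qed
  finally show ?thesis .
qed

end

section \<open>The exponential bound\<close>

lemma outer_prob_le_measure:
  assumes "T \<in> sets M" "S \<inter> space M \<subseteq> T"
  shows "outer_prob M S \<le> measure M T"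
  unfolding outer_prob_def
  by (rule cInf_lower) (use assms in \<open>auto intro: bdd_belowI[of _ 0]\<close>)

lemma outer_prob_nonneg: "prob_space M \<Longrightarrow> outer_prob M S \<ge> 0"
  unfolding outer_prob_def by (rule cInf_greatest) auto

lemma A_max_Pi2_le_path_cover_weight:
  fixes N :: "'a::euclidean_space \<times> real \<Rightarrow> nat"
  assumes L: "L > 0"
  shows "A_max l (Pi2 m N)
    \<le> (SUP ss \<in> {ss. set ss \<subseteq> lattice_steps L \<and> length ss = nat \<lfloor>4 * l / L\<rfloor>}.
          slab_weight (path_cover L ss) m N)"
  unfolding A_max_def
proof (rule SUP_least, clarify)
  fix V :: "'a set" and E assume "animal V E" "0 \<in> V" "animal_length E \<le> l"
  then obtain ss where "set ss \<subseteq> lattice_steps L" "length ss = nat \<lfloor>4 * l / L\<rfloor>" "V \<subseteq> path_cover L ss"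
    using animal_path_cover[OF L] by blast
  then show "mass (fst (V, E)) (Pi2 m N)
      \<le> (SUP ss \<in> {ss. set ss \<subseteq> lattice_steps L \<and> length ss = nat \<lfloor>4 * l / L\<rfloor>}.
          slab_weight (path_cover L ss) m N)"
    by (intro SUP_upper2[of ss] mass_Pi2_le_slab_weight) auto
qed

context marked_poisson_process
begin

lemma emeasure_path_cover_weight_greater:
  assumes L: "L > 0" and m: "m > 0" and lam: "lam \<ge> 0"
    and fin: "(\<integral>\<^sup>+ t. shifted_exp_tail lam m t \<partial>nu) < \<infinity>"
  shows "emeasure M {\<omega> \<in> space M. ennreal x < slab_weight (path_cover L ss) m (PP \<omega>)}
    \<le> ennreal (exp (- lam * x) *
      exp ((real (length ss) + 1) * (4 * L) ^ DIM('a) * enn2real (\<integral>\<^sup>+ t. shifted_exp_tail lam m t \<partial>nu)))"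
proof -
  let ?U = "path_cover L ss" and ?\<delta> = "enn2real (\<integral>\<^sup>+ t. shifted_exp_tail lam m t \<partial>nu)"
  have U: "emeasure lborel ?U \<le> ennreal ((real (length ss) + 1) * (4 * L) ^ DIM('a))"
    using L by (intro emeasure_path_cover_le) simp
  then have "enn2real (emeasure lborel ?U) \<le> (real (length ss) + 1) * (4 * L) ^ DIM('a)"
    using enn2real_mono[OF U] L by simp
  then have "exp (enn2real (emeasure lborel ?U) * ?\<delta>) \<le> exp ((real (length ss) + 1) * (4 * L) ^ DIM('a) * ?\<delta>)"
    by (simp add: mult_right_mono)
  moreover have "emeasure M {\<omega> \<in> space M. ennreal x < slab_weight ?U m (PP \<omega>)}
      \<le> ennreal (exp (- lam * x)) * ennreal (exp (enn2real (emeasure lborel ?U) * ?\<delta>))"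
    using U by (intro emeasure_slab_weight_greater path_cover_sets m lam fin) (simp add: le_less_trans)
  ultimately show ?thesis
    by (simp add: ennreal_mult[symmetric] order_trans ennreal_leI)
qed

lemma outer_prob_large_animal_le:
  fixes l :: real
  assumes L: "L > 0" and m: "m > 0" and lam: "lam \<ge> 0" and x: "0 < x"
    and fin: "(\<integral>\<^sup>+ t. shifted_exp_tail lam m t \<partial>nu) < \<infinity>"
  defines "N \<equiv> nat \<lfloor>4 * l / L\<rfloor>"
  shows "outer_prob M {\<omega> \<in> space M. A_max l (Pi2 m (PP \<omega>)) \<ge> ennreal (2 * x)}
    \<le> real (card (lattice_steps L :: 'a set)) ^ N * (exp (- lam * x) *
      exp ((real N + 1) * (4 * L) ^ DIM('a) * enn2real (\<integral>\<^sup>+ t. shifted_exp_tail lam m t \<partial>nu)))"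
proof -
  define S where "S = {ss :: 'a list. set ss \<subseteq> lattice_steps L \<and> length ss = N}"
  define G where "G ss = {\<omega> \<in> space M. ennreal x < slab_weight (path_cover L ss) m (PP \<omega>)}" for ss
  define bound where "bound = exp (- lam * x) *
      exp ((real N + 1) * (4 * L) ^ DIM('a) * enn2real (\<integral>\<^sup>+ t. shifted_exp_tail lam m t \<partial>nu))"
  have "finite S" unfolding S_def by (rule finite_lists_length_eq[OF finite_lattice_steps])
  have G [measurable]: "G ss \<in> sets M" for ss
    unfolding G_def using slab_weight_measurable[OF path_cover_sets] by measurable
  have "{\<omega> \<in> space M. A_max l (Pi2 m (PP \<omega>)) \<ge> ennreal (2 * x)} \<inter> space M \<subseteq> (\<Union>ss\<in>S. G ss)"
  proof clarify
    fix \<omega> assume "\<omega> \<in> space M" "ennreal (2 * x) \<le> A_max l (Pi2 m (PP \<omega>))"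
    moreover have "ennreal x < ennreal (2 * x)" using x by (simp add: ennreal_lessI)
    ultimately have "ennreal x < (SUP ss \<in> S. slab_weight (path_cover L ss) m (PP \<omega>))"
      using A_max_Pi2_le_path_cover_weight[OF L, of l m "PP \<omega>"] unfolding S_def N_def
      by (meson less_le_trans)
    then show "\<omega> \<in> (\<Union>ss\<in>S. G ss)"
      using \<open>\<omega> \<in> space M\<close> unfolding G_def by (auto simp: less_SUP_iff)
  qed
  then have "outer_prob M {\<omega> \<in> space M. A_max l (Pi2 m (PP \<omega>)) \<ge> ennreal (2 * x)}
      \<le> measure M (\<Union>ss\<in>S. G ss)"
    using \<open>finite S\<close> by (intro outer_prob_le_measure) auto
  also have "\<dots> \<le> (\<Sum>ss\<in>S. measure M (G ss))"
    by (rule measure_UNION_le[OF \<open>finite S\<close>]) simp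
  also have "\<dots> \<le> (\<Sum>ss\<in>S. bound)"
  proof (rule sum_mono)
    fix ss assume "ss \<in> S"
    then have "emeasure M (G ss) \<le> ennreal bound"
      unfolding G_def bound_def S_def
      using emeasure_path_cover_weight_greater[OF L m lam fin, of x ss] by simp
    then show "measure M (G ss) \<le> bound"
      unfolding bound_def by (simp add: emeasure_eq_measure ennreal_le_iff)
  qed
  also have "\<dots> = real (card (lattice_steps L :: 'a set)) ^ N * bound"
    unfolding S_def by (simp add: card_lists_length_eq[OF finite_lattice_steps])
  finally show ?thesis unfolding bound_def .
qed

end

text \<open>The constants: \<open>L\<close> is large enough that the entropy \<open>5\<^sup>d\<^sup>N\<close> of the lattice paths costs
  at most \<open>\<lambda>\<epsilon>l/8\<close>, and \<open>\<delta>\<close> small enough that the Poisson factor costs at most \<open>\<lambda>\<epsilon>l/8\<close>.\<close>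

lemma lattice_path_bound_le_exp:
  fixes c d N :: nat and l L lam \<epsilon> K \<delta> :: real
  assumes l: "l \<ge> 1" and L: "L > 0" and rate: "lam * \<epsilon> > 0" and K: "K > 0" and \<delta>: "\<delta> \<ge> 0"
    and c: "c \<le> 5 ^ d" and N: "real N \<le> 4 * l / L"
    and L_large: "32 * d * ln 5 \<le> lam * \<epsilon> * L"
    and \<delta>_small: "\<delta> \<le> lam * \<epsilon> / (8 * ((4 / L + 1) * K))"
  shows "real c ^ N * (exp (- lam * (\<epsilon> * l / 2)) * exp ((real N + 1) * K * \<delta>))
    \<le> exp (- (lam * \<epsilon> / 4 * l))"
proof -
  have "real N * d * ln 5 \<le> (4 * l / L) * d * ln 5"
    using N by (intro mult_right_mono) auto
  also have "\<dots> = (32 * d * ln 5) * l / (8 * L)" by (simp add: field_simps)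
  also have "\<dots> \<le> (lam * \<epsilon> * L) * l / (8 * L)"
    using L_large l L by (intro divide_right_mono mult_right_mono) auto
  also have "\<dots> = lam * \<epsilon> * l / 8" using L by (simp add: field_simps)
  finally have entropy: "real N * d * ln 5 \<le> lam * \<epsilon> * l / 8" .
  have "real N + 1 \<le> (4 / L + 1) * l"
    using N l by (simp add: field_simps)
  then have "(real N + 1) * K * \<delta> \<le> (4 / L + 1) * l * K * \<delta>"
    using K \<delta> by (intro mult_right_mono) auto
  also have "\<dots> = l * ((4 / L + 1) * K * \<delta>)" by (simp add: ac_simps)
  also have "\<dots> \<le> l * ((4 / L + 1) * K * (lam * \<epsilon> / (8 * ((4 / L + 1) * K))))"
    using \<delta>_small L K l by (intro mult_left_mono) (auto intro: add_pos_pos)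
  also have "\<dots> = lam * \<epsilon> * l / 8"
  proof -
    have "l * (C * (x / (8 * C))) = x * l / 8" if "C > 0" for C x :: real
      using that by (simp add: field_simps)
    moreover have "(4 / L + 1) * K > 0" using L K by (simp add: add_pos_pos)
    ultimately show ?thesis by blast
  qed
  finally have poisson: "(real N + 1) * K * \<delta> \<le> lam * \<epsilon> * l / 8" .
  have "real c ^ N \<le> (5 ^ d) ^ N"
    using c by (intro power_mono) (simp_all add: of_nat_le_iff[symmetric])
  also have "\<dots> = exp (ln ((5::real) ^ (d * N)))"
    by (simp add: power_mult)
  also have "\<dots> = exp (real N * d * ln 5)"
    by (simp add: ln_realpow ac_simps)
  finally have "real c ^ N * (exp (- lam * (\<epsilon> * l / 2)) * exp ((real N + 1) * K * \<delta>))
      \<le> exp (real N * d * ln 5) * (exp (- lam * (\<epsilon> * l / 2)) * exp ((real N + 1) * K * \<delta>))"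
    by (rule mult_right_mono) simp
  also have "\<dots> = exp (real N * d * ln 5 - lam * (\<epsilon> * l / 2) + (real N + 1) * K * \<delta>)"
    by (simp only: exp_add[symmetric]) (simp add: algebra_simps)
  also have "\<dots> \<le> exp (- (lam * \<epsilon> / 4 * l))"
    using entropy poisson by simp
  finally show ?thesis .
qed

lemma rate_le_neg_log:
  assumes l: "l > 0" and p: "0 \<le> p" "p \<le> exp (- (c * l))"
  shows "ereal c \<le> ereal (1 / l) * neg_log p"
proof (cases "p = 0")
  case False
  then have "ln p \<le> - (c * l)"
    using p by (subst ln_exp[symmetric]) (simp only: ln_le_cancel_iff exp_gt_zero)
  then have "c \<le> 1 / l * - ln p"
    using l by (simp add: field_simps)
  then show ?thesis
    using False by (simp add: neg_log_def)
qed (use l in \<open>simp add: neg_log_def\<close>)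

lemma (in marked_poisson_process) large_animal_rate:
  assumes lam: "lam > 0" and \<epsilon>: "\<epsilon> > 0"
    and moment: "(\<integral>\<^sup>+ t \<in> {0<..}. ennreal (exp (lam * t) - 1) \<partial>nu) < \<infinity>"
  shows "\<exists>m>0. \<forall>l\<ge>1. ereal (lam * \<epsilon> / 4) \<le> ereal (1 / l) *
    neg_log (outer_prob M {\<omega> \<in> space M. A_max l (Pi2 m (PP \<omega>)) \<ge> ennreal (\<epsilon> * l)})"
proof -
  define d where "d = DIM('a)"
  define L where "L = max 1 (32 * d * ln 5 / (lam * \<epsilon>))"
  define K where "K = (4 * L) ^ DIM('a)"
  have rate: "lam * \<epsilon> > 0" using lam \<epsilon> by simp
  have "L \<ge> 1" "32 * d * ln 5 / (lam * \<epsilon>) \<le> L"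
    unfolding L_def by simp_all
  then have L: "L > 0" "32 * d * ln 5 \<le> lam * \<epsilon> * L"
    using rate by (simp_all add: pos_divide_le_eq ac_simps)
  have K: "K > 0" unfolding K_def using L by simp
  define \<eta> where "\<eta> = lam * \<epsilon> / (8 * ((4 / L + 1) * K))"
  have "\<eta> > 0"
    unfolding \<eta>_def using rate L K by (simp add: add_pos_pos)
  then obtain m where m: "m \<ge> 1" and tail: "(\<integral>\<^sup>+ t. shifted_exp_tail lam m t \<partial>nu) < ennreal \<eta>"
    using shifted_exp_tail_small[OF nu_sets _ moment] lam by auto
  define \<delta> where "\<delta> = enn2real (\<integral>\<^sup>+ t. shifted_exp_tail lam m t \<partial>nu)"
  have fin: "(\<integral>\<^sup>+ t. shifted_exp_tail lam m t \<partial>nu) < \<infinity>"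
    using tail by (simp add: less_trans)
  have "\<delta> \<le> enn2real (ennreal \<eta>)"
    unfolding \<delta>_def using tail by (intro enn2real_mono) simp_all
  then have \<delta>: "\<delta> \<ge> 0" "\<delta> \<le> \<eta>"
    unfolding \<delta>_def using \<open>\<eta> > 0\<close> by simp_all
  have "ereal (lam * \<epsilon> / 4) \<le> ereal (1 / l) *
      neg_log (outer_prob M {\<omega> \<in> space M. A_max l (Pi2 m (PP \<omega>)) \<ge> ennreal (\<epsilon> * l)})"
    if l: "l \<ge> 1" for l
  proof (rule rate_le_neg_log)
    let ?N = "nat \<lfloor>4 * l / L\<rfloor>"
    have "outer_prob M {\<omega> \<in> space M. A_max l (Pi2 m (PP \<omega>)) \<ge> ennreal (2 * (\<epsilon> * l / 2))}
        \<le> real (card (lattice_steps L :: 'a set)) ^ ?N *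
          (exp (- lam * (\<epsilon> * l / 2)) * exp ((real ?N + 1) * K * \<delta>))"
      unfolding K_def \<delta>_def using L m lam \<epsilon> l fin
      by (intro outer_prob_large_animal_le) simp_all
    also have "\<dots> \<le> exp (- (lam * \<epsilon> / 4 * l))"
      using l L rate K \<delta> card_lattice_steps_le[of L] unfolding d_def \<eta>_def
      by (intro lattice_path_bound_le_exp) simp_all
    finally show "outer_prob M {\<omega> \<in> space M. A_max l (Pi2 m (PP \<omega>)) \<ge> ennreal (\<epsilon> * l)}
        \<le> exp (- (lam * \<epsilon> / 4 * l))"
      by simp
  qed (use l outer_prob_nonneg[OF prob_space_axioms] in auto)
  then show ?thesis using m by (intro exI[of _ m]) auto
qed

theorem lemma5p10:
  fixes nu :: "real measure" and M :: "'w measure"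
    and PP :: "'w \<Rightarrow> ('a::euclidean_space \<times> real) \<Rightarrow> nat"
  assumes dim: "DIM('a) \<ge> 2"
    and nu_sets: "sets nu = sets borel"
    and nu_support: "emeasure nu {..0} = 0"
    and nu_locfin: "\<forall>a b. 0 < a \<longrightarrow> a \<le> b \<longrightarrow> emeasure nu {a..b} < \<infinity>"
    and nu_nonzero: "emeasure nu (space nu) \<noteq> 0"
    and poisson: "poisson_pp M nu PP"
    and moment: "\<exists>lam>0. (\<integral>\<^sup>+ t \<in> {0<..}. ennreal (exp (lam * t) - 1) \<partial>nu) < \<infinity>"
  shows "\<forall>\<epsilon>>0. \<exists>m>0.
           Liminf at_top (\<lambda>l::real. ereal (1 / l) *
             neg_log (outer_prob M {\<omega> \<in> space M. A_max l (Pi2 m (PP \<omega>)) \<ge> ennreal (\<epsilon> * l)})) > 0"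
proof (intro allI impI)
  fix \<epsilon> :: real assume "\<epsilon> > 0"
  interpret marked_poisson_process nu M PP
    using poisson nu_sets nu_support nu_locfin by unfold_locales
  obtain lam where lam: "lam > 0" "(\<integral>\<^sup>+ t \<in> {0<..}. ennreal (exp (lam * t) - 1) \<partial>nu) < \<infinity>"
    using moment by blast
  obtain m where "m > 0" and bound: "\<forall>l\<ge>1. ereal (lam * \<epsilon> / 4) \<le> ereal (1 / l) *
      neg_log (outer_prob M {\<omega> \<in> space M. A_max l (Pi2 m (PP \<omega>)) \<ge> ennreal (\<epsilon> * l)})"
    using large_animal_rate[OF lam(1) \<open>\<epsilon> > 0\<close> lam(2)] by blast
  have "ereal (lam * \<epsilon> / 4) \<le> Liminf at_top (\<lambda>l::real. ereal (1 / l) *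
      neg_log (outer_prob M {\<omega> \<in> space M. A_max l (Pi2 m (PP \<omega>)) \<ge> ennreal (\<epsilon> * l)}))"
    using bound by (intro Liminf_bounded) (auto simp: eventually_at_top_linorder)
  moreover have "0 < ereal (lam * \<epsilon> / 4)" using lam \<open>\<epsilon> > 0\<close> by simp
  ultimately show "\<exists>m>0. Liminf at_top (\<lambda>l::real. ereal (1 / l) *
      neg_log (outer_prob M {\<omega> \<in> space M. A_max l (Pi2 m (PP \<omega>)) \<ge> ennreal (\<epsilon> * l)})) > 0"
    using \<open>m > 0\<close> by (blast intro: less_le_trans)
qed

end
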